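(* Let $d$ and $m$ be integers, $0<\epsilon\le 1$ a real number, and $0<\delta<1$. There is a non-adaptive randomized group testing algorithm that makes $O((1/\epsilon^2)\log(1/\delta))$ tests and: if $d<m$ then, with probability at least $1-\delta$, it returns $0$; if $d>(1+\epsilon)m$ then, with probability at least $1-\delta$, it returns $1$; if $m\le d\le(1+\epsilon)m$ it returns $0$ or $1$. Here $d$ is the (unknown) number of defective items.
   Context: Group testing: items $X=[n]$, unknown defective set $I\subseteq X$ with $d=|I|$. A test $Q\subseteq X$ has answer $1$ if $Q\cap I\neq\emptyset$ and $0$ otherwise. A non-adaptive (randomized) algorithm chooses all its tests before seeing any answer, then computes its output from the answers. Logarithms are base 2. *)

theory Defs
  imports "HOL-Probability.Probability"
begin

(* Items are X = {1..n}. A test is a set Q of items; its answer on defective set I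
   is True (=1) iff Q \<inter> I \<noteq> {}. *)
definition answers :: "nat set \<Rightarrow> nat set list \<Rightarrow> bool list" where
  "answers I Qs = map (\<lambda>Q. Q \<inter> I \<noteq> {}) Qs"

(* A non-adaptive randomized algorithm is a probability distribution over pairs
   (Qs, f): the list of tests Qs (chosen before any answer is seen) and the decision
   function f computing the output from the answer vector. Output True means 1,
   False means 0. *)
type_synonym nonadaptive_alg = "(nat set list \<times> (bool list \<Rightarrow> bool)) pmf"

definition valid_alg :: "nat \<Rightarrow> nonadaptive_alg \<Rightarrow> bool" where
  "valid_alg n A \<longleftrightarrow> (\<forall>(Qs, f) \<in> set_pmf A. \<forall>Q \<in> set Qs. Q \<subseteq> {1..n})"

definition run_alg :: "nonadaptive_alg \<Rightarrow> nat set \<Rightarrow> bool pmf" where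
  "run_alg A I = map_pmf (\<lambda>(Qs, f). f (answers I Qs)) A"

end

theory Submission
  imports Defs
begin

text \<open>
  Let each test contain every item independently with probability \<open>p\<close>, where
  \<open>1 - p = 2 powr (-1/m)\<close>. A test is then negative with probability \<open>2 powr (-d/m)\<close>,
  which is at least \<open>1/2\<close> if \<open>d < m\<close> and at most \<open>2 powr (-1-\<epsilon>) \<le> 1/2 - \<epsilon>/8\<close> if
  \<open>d > (1+\<epsilon>) m\<close>. Take \<open>k = O(log(1/\<delta>)/\<epsilon>\<^sup>2)\<close> independent such tests and answer 1 iff
  fewer than a fraction \<open>1/2 - \<epsilon>/16\<close> of them are negative: the number of negative
  tests is binomially distributed, and Hoeffding's inequality bounds both errors by
  \<open>exp (-2 k (\<epsilon>/16)\<^sup>2) \<le> \<delta>\<close>. The degenerate cases \<open>m \<le> 0\<close> and \<open>\<delta> \<ge> 1/2\<close> are handled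
  by a constant answer and by a fair coin.
\<close>

lemma map_pmf_eq_bernoulli_pmf:
  "map_pmf P M = bernoulli_pmf (measure_pmf.prob M {x. P x})"
proof (rule pmf_eqI)
  fix b :: bool
  have "measure_pmf.prob M {x. \<not> P x} = 1 - measure_pmf.prob M {x. P x}"
    using measure_pmf.prob_compl[of "{x. P x}" M]
    by (simp add: Compl_eq_Diff_UNIV[symmetric] Collect_neg_eq)
  then show "pmf (map_pmf P M) b = pmf (bernoulli_pmf (measure_pmf.prob M {x. P x})) b"
    by (cases b) (simp_all add: pmf_map vimage_def)
qed

lemma two_powr_neg_le:
  fixes e :: real
  assumes "0 \<le> e" "e \<le> 2"
  shows "2 powr (- e) \<le> 1 - e / 4"
proof -
  have "1 / 2 \<le> ln (2::real)"
    using ln_le_minus_one[of "1 / 2 :: real"] by (simp add: ln_div)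
  then have "1 + e / 2 \<le> 1 + e * ln 2"
    using mult_left_mono[of "1 / 2" "ln 2" e] assms(1) by simp
  also have "\<dots> \<le> exp (e * ln 2)"
    by (rule exp_ge_add_one_self)
  also have "\<dots> = 2 powr e"
    by (simp add: powr_def mult.commute)
  finally have "1 + e / 2 \<le> 2 powr e" .
  have "1 \<le> (1 - e / 4) * (1 + e / 2)"
    using mult_right_mono[OF assms(2) assms(1)] by (simp add: algebra_simps)
  also have "\<dots> \<le> (1 - e / 4) * 2 powr e"
    using \<open>1 + e / 2 \<le> 2 powr e\<close> assms by (intro mult_left_mono) auto
  finally show ?thesis
    by (simp add: powr_minus field_simps)
qed

lemma prob_binomial_less_le:
  assumes "0 < k" "0 \<le> r" "r \<le> 1" "0 \<le> s" "t \<le> r - s"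
  shows "measure_pmf.prob (binomial_pmf k r) {c. real c < t * k} \<le> exp (- 2 * real k * s\<^sup>2)"
proof -
  interpret binomial_distribution k r
    using assms by unfold_locales auto
  have "{c. real c < t * k} \<subseteq> {c. c / k \<le> r - s}"
    using assms mult_right_mono[OF assms(5), of k] by (auto simp: field_simps)
  then have "measure_pmf.prob (binomial_pmf k r) {c. real c < t * k}
      \<le> measure_pmf.prob (binomial_pmf k r) {c. c / k \<le> r - s}"
    by (rule measure_pmf.finite_measure_mono) simp
  also have "\<dots> \<le> exp (- 2 * real k * s\<^sup>2)"
    using prob_le'[OF assms(1,4)] by simp
  finally show ?thesis .
qed

lemma prob_binomial_less_ge:
  assumes "0 < k" "0 \<le> r" "r \<le> 1" "0 \<le> s" "r + s \<le> t"
  shows "1 - exp (- 2 * real k * s\<^sup>2) \<le> measure_pmf.prob (binomial_pmf k r) {c. real c < t * k}"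
proof -
  interpret binomial_distribution k r
    using assms by unfold_locales auto
  have "- {c. real c < t * k} \<subseteq> {c. r + s \<le> c / k}"
    using assms mult_right_mono[OF assms(5), of k] by (auto simp: field_simps)
  then have "measure_pmf.prob (binomial_pmf k r) (- {c. real c < t * k})
      \<le> measure_pmf.prob (binomial_pmf k r) {c. r + s \<le> c / k}"
    by (rule measure_pmf.finite_measure_mono) simp
  also have "\<dots> \<le> exp (- 2 * real k * s\<^sup>2)"
    using prob_ge'[OF assms(1,4)] by simp
  finally show ?thesis
    using measure_pmf.prob_compl[of "{c. real c < t * k}" "binomial_pmf k r"]
    by (simp add: Compl_eq_Diff_UNIV)
qed

definition random_test :: "nat \<Rightarrow> real \<Rightarrow> nat set pmf" where
  "random_test n p = map_pmf (\<lambda>h. {i \<in> {1..n}. h i}) (Pi_pmf {1..n} False (\<lambda>_. bernoulli_pmf p))"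

lemma set_pmf_random_test_subset: "Q \<in> set_pmf (random_test n p) \<Longrightarrow> Q \<subseteq> {1..n}"
  unfolding random_test_def by auto

lemma prob_random_test_disjoint:
  assumes I: "I \<subseteq> {1..n}" and p: "0 \<le> p" "p \<le> 1"
  shows "measure_pmf.prob (random_test n p) {Q. Q \<inter> I = {}} = (1 - p) ^ card I"
proof -
  have "(\<lambda>h. {i \<in> {1..n}. h i}) -` {Q. Q \<inter> I = {}}
      = Pi {1..n} (\<lambda>i. if i \<in> I then {False} else UNIV)"
    using I by (auto simp: Pi_def)
  then have "measure_pmf.prob (random_test n p) {Q. Q \<inter> I = {}}
      = (\<Prod>i\<in>{1..n}. measure_pmf.prob (bernoulli_pmf p) (if i \<in> I then {False} else UNIV))"
    unfolding random_test_def measure_map_pmf by (simp add: measure_Pi_pmf_Pi)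
  also have "\<dots> = (\<Prod>i\<in>{1..n}. if i \<in> I then 1 - p else 1)"
    using p by (intro prod.cong) (auto simp: measure_pmf_single)
  also have "\<dots> = (1 - p) ^ card I"
    using I by (simp add: prod.If_cases Int_absorb1)
  finally show ?thesis .
qed

definition threshold_alg :: "nat \<Rightarrow> real \<Rightarrow> nat \<Rightarrow> real \<Rightarrow> nonadaptive_alg" where
  "threshold_alg n p k t =
     map_pmf (\<lambda>G. (map G [0..<k], \<lambda>bs. real (length (filter Not bs)) < t * k))
       (Pi_pmf {..<k} {} (\<lambda>_. random_test n p))"

lemma valid_threshold_alg: "valid_alg n (threshold_alg n p k t)"
proof -
  have "G j \<subseteq> {1..n}" if "G \<in> set_pmf (Pi_pmf {..<k} {} (\<lambda>_. random_test n p))" "j < k" for G j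
  proof (rule set_pmf_random_test_subset)
    show "G j \<in> set_pmf (random_test n p)"
      using that by (auto simp: set_Pi_pmf PiE_dflt_def)
  qed
  then show ?thesis
    unfolding valid_alg_def threshold_alg_def by auto
qed

lemma length_threshold_alg: "(Qs, f) \<in> set_pmf (threshold_alg n p k t) \<Longrightarrow> length Qs = k"
  unfolding threshold_alg_def by auto

lemma run_threshold_alg:
  assumes I: "I \<subseteq> {1..n}" and p: "0 \<le> p" "p \<le> 1"
  shows "run_alg (threshold_alg n p k t) I
           = map_pmf (\<lambda>c. real c < t * k) (binomial_pmf k ((1 - p) ^ card I))"
proof -
  let ?miss = "\<lambda>Q. Q \<inter> I = {}"
  have "binomial_pmf k ((1 - p) ^ card I)
      = map_pmf (\<lambda>f. card {j \<in> {..<k}. f j})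
          (Pi_pmf {..<k} True (\<lambda>_. bernoulli_pmf ((1 - p) ^ card I)))"
    using p by (intro binomial_pmf_altdef') (auto intro: power_le_one)
  also have "Pi_pmf {..<k} True (\<lambda>_. bernoulli_pmf ((1 - p) ^ card I))
      = Pi_pmf {..<k} True (\<lambda>_. map_pmf ?miss (random_test n p))"
    using assms by (simp add: map_pmf_eq_bernoulli_pmf prob_random_test_disjoint)
  also have "\<dots> = map_pmf (\<lambda>G. ?miss \<circ> G) (Pi_pmf {..<k} {} (\<lambda>_. random_test n p))"
    by (rule Pi_pmf_map) auto
  finally have binomial: "binomial_pmf k ((1 - p) ^ card I)
      = map_pmf (\<lambda>G. card {j \<in> {..<k}. ?miss (G j)})
          (Pi_pmf {..<k} {} (\<lambda>_. random_test n p))"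
    by (simp add: pmf.map_comp o_def)
  have count: "length (filter Not (answers I (map G [0..<k])))
      = card {j \<in> {..<k}. ?miss (G j)}" for G
    unfolding answers_def length_filter_conv_card by (auto intro!: arg_cong[where f = card])
  show ?thesis
    unfolding run_alg_def threshold_alg_def binomial by (simp add: pmf.map_comp o_def count)
qed

definition solves_gap :: "nat \<Rightarrow> int \<Rightarrow> real \<Rightarrow> real \<Rightarrow> real \<Rightarrow> nonadaptive_alg \<Rightarrow> bool" where
  "solves_gap n m \<epsilon> \<delta> N A \<longleftrightarrow>
     valid_alg n A \<and>
     (\<forall>(Qs, f) \<in> set_pmf A. real (length Qs) \<le> N) \<and>
     (\<forall>I. I \<subseteq> {1..n} \<longrightarrow>
        (int (card I) < m \<longrightarrow> pmf (run_alg A I) False \<ge> 1 - \<delta>) \<and>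
        (real (card I) > (1 + \<epsilon>) * real_of_int m \<longrightarrow> pmf (run_alg A I) True \<ge> 1 - \<delta>))"

lemma solves_gap_const_True:
  assumes "m \<le> 0" "0 \<le> \<delta>" "0 \<le> N"
  shows "solves_gap n m \<epsilon> \<delta> N (return_pmf ([], \<lambda>_. True))"
  using assms by (simp add: solves_gap_def valid_alg_def run_alg_def)

lemma solves_gap_fair_coin:
  assumes "1 / 2 \<le> \<delta>" "0 \<le> N"
  shows "solves_gap n m \<epsilon> \<delta> N (map_pmf (\<lambda>b. ([], \<lambda>_. b)) (bernoulli_pmf (1 / 2)))"
  using assms by (auto simp: solves_gap_def valid_alg_def run_alg_def pmf.map_comp o_def)

lemma solves_gap_threshold_alg:
  assumes m: "0 < m" and \<epsilon>: "0 < \<epsilon>" "\<epsilon> \<le> 1" and k: "0 < k" "real k \<le> N"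
    and err: "exp (- 2 * real k * (\<epsilon> / 16)\<^sup>2) \<le> \<delta>"
  shows "solves_gap n m \<epsilon> \<delta> N (threshold_alg n (1 - 2 powr (- 1 / m)) k (1 / 2 - \<epsilon> / 16))"
proof -
  define p where "p = 1 - 2 powr (- 1 / m)"
  define t where "t = 1 / 2 - \<epsilon> / 16"
  have "2 powr (- 1 / m) \<le> 2 powr 0"
    using m by (intro powr_mono) auto
  then have p: "0 \<le> p" "p \<le> 1"
    by (auto simp: p_def)
  have miss: "(1 - p) ^ d = 2 powr (- d / m)" for d
    using m by (simp add: p_def powr_realpow[symmetric] powr_powr)
  let ?P = "\<lambda>I. measure_pmf.prob (binomial_pmf k ((1 - p) ^ card I)) {c. real c < t * k}"
  have run: "run_alg (threshold_alg n p k t) I = bernoulli_pmf (?P I)" if "I \<subseteq> {1..n}" for I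
    unfolding run_threshold_alg[OF that p] by (rule map_pmf_eq_bernoulli_pmf)
  have "1 - \<delta> \<le> pmf (run_alg (threshold_alg n p k t) I) False"
    if I: "I \<subseteq> {1..n}" and d: "int (card I) < m" for I
  proof -
    have "- 1 \<le> - real (card I) / m"
      using d m by (simp add: field_simps)
    then have "2 powr (- 1) \<le> (1 - p) ^ card I"
      unfolding miss by (intro powr_mono) auto
    then have "t \<le> (1 - p) ^ card I - \<epsilon> / 16"
      by (simp add: t_def powr_minus)
    then have "?P I \<le> exp (- 2 * real k * (\<epsilon> / 16)\<^sup>2)"
      using p \<epsilon> by (intro prob_binomial_less_le k(1)) (auto intro: power_le_one)
    then show ?thesis
      using err by (simp add: run[OF I])
  qed
  moreover have "1 - \<delta> \<le> pmf (run_alg (threshold_alg n p k t) I) True"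
    if I: "I \<subseteq> {1..n}" and d: "real (card I) > (1 + \<epsilon>) * real_of_int m" for I
  proof -
    have "- real (card I) / m \<le> - 1 + - \<epsilon>"
      using d m by (simp add: field_simps)
    then have "(1 - p) ^ card I \<le> 2 powr (- 1) * 2 powr (- \<epsilon>)"
      unfolding miss powr_add[symmetric] by (intro powr_mono) auto
    also have "\<dots> \<le> 1 / 2 - \<epsilon> / 8"
      using two_powr_neg_le[of \<epsilon>] \<epsilon> by (simp add: powr_minus)
    finally have "(1 - p) ^ card I + \<epsilon> / 16 \<le> t"
      by (simp add: t_def)
    then have "1 - exp (- 2 * real k * (\<epsilon> / 16)\<^sup>2) \<le> ?P I"
      using p \<epsilon> by (intro prob_binomial_less_ge k(1)) (auto intro: power_le_one)
    then show ?thesis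
      using err by (simp add: run[OF I])
  qed
  ultimately show ?thesis
    using k unfolding solves_gap_def p_def t_def
    by (auto simp: valid_threshold_alg dest: length_threshold_alg)
qed

lemma sample_size_exists:
  assumes \<epsilon>: "0 < \<epsilon>" "\<epsilon> \<le> 1" and \<delta>: "0 < \<delta>" "\<delta> < 1 / 2"
  obtains k :: nat where "0 < k" "real k \<le> 129 * (1 / \<epsilon>\<^sup>2) * log 2 (1 / \<delta>)"
    "exp (- 2 * real k * (\<epsilon> / 16)\<^sup>2) \<le> \<delta>"
proof
  define B where "B = log 2 (1 / \<delta>) / \<epsilon>\<^sup>2"
  define k where "k = nat \<lceil>128 * B\<rceil>"
  have "1 \<le> log 2 (1 / \<delta>)"
    using \<delta> by (simp add: le_log_iff le_divide_eq)
  moreover have "\<epsilon>\<^sup>2 \<le> 1"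
    using \<epsilon> by (simp add: power_le_one)
  ultimately have B: "1 \<le> B"
    using \<epsilon> by (simp add: B_def le_divide_eq)
  have k: "128 * B \<le> k" "k \<le> 128 * B + 1"
    unfolding k_def using B by linarith+
  then show "0 < k"
    using B by linarith
  show "real k \<le> 129 * (1 / \<epsilon>\<^sup>2) * log 2 (1 / \<delta>)"
    using k B by (simp add: B_def)
  have "ln (1 / \<delta>) \<le> log 2 (1 / \<delta>)"
    using \<delta> ln_2_less_1 by (simp add: log_def le_divide_eq mult_le_cancel_left1)
  also have "log 2 (1 / \<delta>) \<le> k * \<epsilon>\<^sup>2 / 128"
    using k \<epsilon> by (simp add: B_def field_simps)
  finally have "exp (- 2 * real k * (\<epsilon> / 16)\<^sup>2) \<le> exp (- ln (1 / \<delta>))"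
    by (simp add: power_divide)
  then show "exp (- 2 * real k * (\<epsilon> / 16)\<^sup>2) \<le> \<delta>"
    using \<delta> by (simp add: ln_div)
qed

lemma solves_gap_exists:
  assumes \<epsilon>: "0 < \<epsilon>" "\<epsilon> \<le> 1" and \<delta>: "0 < \<delta>" "\<delta> < 1"
  shows "\<exists>A. solves_gap n m \<epsilon> \<delta> (129 * (1 / \<epsilon>^2) * log 2 (1 / \<delta>)) A"
proof -
  define N where "N = 129 * (1 / \<epsilon>^2) * log 2 (1 / \<delta>)"
  have N: "0 \<le> N"
    using \<epsilon> \<delta> by (simp add: N_def)
  consider "m \<le> 0" | "1 / 2 \<le> \<delta>" | "0 < m" "\<delta> < 1 / 2"
    by linarith
  then have "\<exists>A. solves_gap n m \<epsilon> \<delta> N A"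
  proof cases
    case 1
    show ?thesis
      using solves_gap_const_True[OF 1 less_imp_le[OF \<delta>(1)] N] by (rule exI)
  next
    case 2
    show ?thesis
      using solves_gap_fair_coin[OF 2 N] by (rule exI)
  next
    case 3
    from sample_size_exists[OF \<epsilon> \<delta>(1) 3(2)] obtain k
      where "0 < k" "real k \<le> N" "exp (- 2 * real k * (\<epsilon> / 16)\<^sup>2) \<le> \<delta>"
      unfolding N_def .
    then have "solves_gap n m \<epsilon> \<delta> N (threshold_alg n (1 - 2 powr (- 1 / m)) k (1 / 2 - \<epsilon> / 16))"
      by (rule solves_gap_threshold_alg[OF 3(1) \<epsilon>])
    then show ?thesis ..
  qed
  then show ?thesis
    unfolding N_def .
qed

theorem lemma15:
  shows "\<exists>C::real. C > 0 \<and>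
    (\<forall>(n::nat) (m::int) (\<epsilon>::real) (\<delta>::real).
      0 < \<epsilon> \<and> \<epsilon> \<le> 1 \<and> 0 < \<delta> \<and> \<delta> < 1 \<longrightarrow>
      (\<exists>A::nonadaptive_alg.
         valid_alg n A \<and>
         (\<forall>(Qs, f) \<in> set_pmf A. real (length Qs) \<le> C * (1 / \<epsilon>^2) * log 2 (1 / \<delta>)) \<and>
         (\<forall>I. I \<subseteq> {1..n} \<longrightarrow>
            (int (card I) < m \<longrightarrow> pmf (run_alg A I) False \<ge> 1 - \<delta>) \<and>
            (real (card I) > (1 + \<epsilon>) * real_of_int m \<longrightarrow> pmf (run_alg A I) True \<ge> 1 - \<delta>))))"
  using solves_gap_exists unfolding solves_gap_def by (intro exI[of _ 129]) simp

end
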